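(* For every $\varepsilon>0$ and every $M>0$ there exists a function $\phi:\mathbb{R}\to\mathbb{R}$ generated by a $\widetilde{\sigma}$-activated network with width $50$ and depth $6$ such that $|\phi(x)-\sigma(x)|<\varepsilon$ for all $x\in[-M,M]$.
   Context: Let $\sigma_1:\mathbb{R}\to\mathbb{R}$ be the continuous triangular-wave function of period $2$: $\sigma_1(x)=|x|$ for $x\in[-1,1]$, $\sigma_1(x+2)=\sigma_1(x)$. Let $\sigma(x)=\sigma_1(x)$ for $x\ge0$ and $\sigma(x)=x/(|x|+1)$ for $x<0$. Define $\widetilde{\sigma}(x)=\frac{x}{-x+1}$ for $x\le 0$ and $\widetilde{\sigma}(x)=\int_0^x\frac{c\,\sigma(t)+1}{(2t+1)^2}\,dt$ for $x>0$, where $c=\big(2\int_0^\infty\frac{\sigma(t)}{(2t+1)^2}dt\big)^{-1}$. For an activation $\eta$ (applied entrywise), a function generated by an $\eta$-activated network with one input, width $N$ and depth $L$ is a function of the form $\mathcal{L}_{\ell}\circ\eta\circ\mathcal{L}_{\ell-1}\circ\cdots\circ\eta\circ\mathcal{L}_0$ with $\ell\le L$ hidden layers, affine maps $\mathcal{L}_i$, $\mathcal{L}_0$ with domain $\mathbb{R}$, $\mathcal{L}_\ell$ with codomain $\mathbb{R}$, and at most $N$ neurons in each hidden layer. *)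

theory Defs
  imports "HOL-Analysis.Analysis"
begin

text \<open>Triangular wave of period 2: equals abs x on [-1,1].\<close>
definition sigma1 :: "real \<Rightarrow> real" where
  "sigma1 x = \<bar>x - 2 * of_int \<lfloor>(x + 1) / 2\<rfloor>\<bar>"

definition sigma :: "real \<Rightarrow> real" where
  "sigma x = (if x \<ge> 0 then sigma1 x else x / (\<bar>x\<bar> + 1))"

definition cconst :: real where
  "cconst = inverse (2 * integral {0..} (\<lambda>t. sigma t / (2 * t + 1)^2))"

definition sigma_tilde :: "real \<Rightarrow> real" where
  "sigma_tilde x = (if x \<le> 0 then x / (- x + 1)
     else integral {0..x} (\<lambda>t. (cconst * sigma t + 1) / (2 * t + 1)^2))"

text \<open>Affine map from R^m to R^n (vectors as nat-indexed functions, entries >= dim are 0).\<close>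
definition affine_map :: "nat \<Rightarrow> nat \<Rightarrow> (nat \<Rightarrow> nat \<Rightarrow> real) \<Rightarrow> (nat \<Rightarrow> real)
    \<Rightarrow> (nat \<Rightarrow> real) \<Rightarrow> (nat \<Rightarrow> real)" where
  "affine_map n m W b v = (\<lambda>i. if i < n then (\<Sum>j<m. W i j * v j) + b i else 0)"

text \<open>Network evaluation: dims = [d0, d1, ..., d_{l+1}], one (W,b) per affine layer;
  activation applied entrywise after every affine map except the last.\<close>
fun eval_net :: "(real \<Rightarrow> real) \<Rightarrow> nat list \<Rightarrow> ((nat \<Rightarrow> nat \<Rightarrow> real) \<times> (nat \<Rightarrow> real)) list
    \<Rightarrow> (nat \<Rightarrow> real) \<Rightarrow> (nat \<Rightarrow> real)" where
  "eval_net act [m, n] [(W, b)] v = affine_map n m W b v"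
| "eval_net act (m # n # k # ds) ((W, b) # ps) v =
     eval_net act (n # k # ds) ps (\<lambda>i. act (affine_map n m W b v i))"
| "eval_net act _ _ v = (\<lambda>i. 0)"

text \<open>f is generated by an act-activated network with one input, one output,
  at most L hidden layers, each with at most N neurons.\<close>
definition net_generated :: "(real \<Rightarrow> real) \<Rightarrow> nat \<Rightarrow> nat \<Rightarrow> (real \<Rightarrow> real) \<Rightarrow> bool" where
  "net_generated act N L f \<longleftrightarrow>
     (\<exists>ds ps. length ds \<ge> 2 \<and> length ds \<le> L + 2 \<and> hd ds = 1 \<and> last ds = 1 \<and>
        (\<forall>k. 0 < k \<and> k < length ds - 1 \<longrightarrow> ds ! k \<le> N) \<and>
        length ps = length ds - 1 \<and>
        f = (\<lambda>x. eval_net act ds ps (\<lambda>j. x) 0))"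

end

theory Submission
  imports Defs
begin

(*
  On (0, oo) the derivative of sigma_tilde is g(t) = (c sigma(t) + 1) / (2t + 1)^2. For an even
  integer T we have sigma(T + y) = sigma1(y), and for large T the factor (2T + 1)^2 / (2(T + y) + 1)^2
  is uniformly close to 1 for y in a bounded set. Hence the rescaled difference quotient
  ((2T + 1)^2 (sigma_tilde(T + y + h) - sigma_tilde(T + y)) / h - 1) / c, a network with one hidden
  layer of width 2, approximates sigma1 uniformly on [0, B] when T is large and h is small.
  Evaluated at 1/2 + x/(4M) and at 2 + x/M it approximates x and |x| on [-M, M], hence also
  max(x, 0) = (x + |x|)/2 and min(x, 0) = (x - |x|)/2. A second hidden layer of width 3 then realises
  sigma(x) = sigma1(max(x, 0)) + sigma_tilde(min(x, 0)), the errors being controlled because sigma1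
  is 1-Lipschitz and sigma_tilde is 1-Lipschitz on (-oo, 0].
*)

lemma reduce_mod_2_bounds:
  fixes x :: real
  shows "-1 \<le> x - 2 * of_int \<lfloor>(x + 1) / 2\<rfloor>" and "x - 2 * of_int \<lfloor>(x + 1) / 2\<rfloor> < 1"
proof -
  have "of_int \<lfloor>(x + 1) / 2\<rfloor> \<le> (x + 1) / 2" "(x + 1) / 2 < of_int \<lfloor>(x + 1) / 2\<rfloor> + 1"
    by linarith+
  then show "-1 \<le> x - 2 * of_int \<lfloor>(x + 1) / 2\<rfloor>" "x - 2 * of_int \<lfloor>(x + 1) / 2\<rfloor> < 1"
    by (simp_all add: field_simps)
qed

lemma sigma1_add_even: "sigma1 (x + 2 * of_int k) = sigma1 x"
proof -
  have "(x + 2 * of_int k + 1) / 2 = (x + 1) / 2 + of_int k" by (simp add: field_simps)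
  then have "\<lfloor>(x + 2 * of_int k + 1) / 2\<rfloor> = \<lfloor>(x + 1) / 2\<rfloor> + k"
    by (simp only: floor_add_int)
  then show ?thesis unfolding sigma1_def by simp
qed

lemma sigma1_nonneg: "0 \<le> sigma1 x"
  unfolding sigma1_def by simp

lemma sigma1_le_one: "sigma1 x \<le> 1"
  using reduce_mod_2_bounds[of x] unfolding sigma1_def by auto

lemma sigma1_le_dist_even: "sigma1 x \<le> \<bar>x - 2 * of_int k\<bar>"
proof -
  define n where "n = \<lfloor>(x + 1) / 2\<rfloor>"
  have "k = n \<or> real_of_int k \<ge> of_int n + 1 \<or> real_of_int k \<le> of_int n - 1"
    by linarith
  then show ?thesis
    using reduce_mod_2_bounds[of x] unfolding sigma1_def n_def[symmetric] by auto
qed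

lemma sigma1_lipschitz: "\<bar>sigma1 x - sigma1 y\<bar> \<le> \<bar>x - y\<bar>"
  using sigma1_le_dist_even[of x "\<lfloor>(y + 1) / 2\<rfloor>"] sigma1_le_dist_even[of y "\<lfloor>(x + 1) / 2\<rfloor>"]
  unfolding sigma1_def by linarith

lemma sigma1_eq_abs:
  assumes "\<bar>x\<bar> \<le> 1"
  shows "sigma1 x = \<bar>x\<bar>"
proof -
  define n where "n = \<lfloor>(x + 1) / 2\<rfloor>"
  have "n = 0 \<or> real_of_int n \<ge> 1 \<or> real_of_int n \<le> -1"
    by linarith
  then have "\<bar>x\<bar> \<le> \<bar>x - 2 * of_int n\<bar>"
    using assms by auto
  then show ?thesis
    using sigma1_le_dist_even[of x 0] unfolding sigma1_def n_def[symmetric] by simp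
qed

lemma continuous_on_sigma1: "continuous_on S sigma1"
  by (rule lipschitz_on_continuous_on[where L = 1], rule lipschitz_onI)
    (auto simp: dist_real_def sigma1_lipschitz)

lemma sigma_eq_sigma1: "x \<ge> 0 \<Longrightarrow> sigma x = sigma1 x"
  unfolding sigma_def by simp

lemma sigma_tilde_nonpos: "x \<le> 0 \<Longrightarrow> sigma_tilde x = x / (1 - x)"
  unfolding sigma_tilde_def by simp

lemma sigma_eq_sigma1_max_plus_sigma_tilde_min:
  "sigma x = sigma1 (max x 0) + sigma_tilde (min x 0)"
  using sigma1_eq_abs[of 0] by (auto simp: sigma_def sigma_tilde_nonpos)

lemma sigma_tilde_lipschitz_nonpos:
  fixes a b :: real
  assumes "a \<le> 0" "b \<le> 0"
  shows "\<bar>sigma_tilde a - sigma_tilde b\<bar> \<le> \<bar>a - b\<bar>"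
proof -
  have denom: "(1 - a) * (1 - b) \<ge> 1"
    using assms mult_mono[of 1 "1 - a" 1 "1 - b"] by simp
  have "sigma_tilde a - sigma_tilde b = (a - b) / ((1 - a) * (1 - b))"
    using assms by (simp add: sigma_tilde_nonpos field_simps)
  then have "\<bar>sigma_tilde a - sigma_tilde b\<bar> = \<bar>a - b\<bar> / ((1 - a) * (1 - b))"
    using denom by simp
  also have "\<dots> \<le> \<bar>a - b\<bar> / 1"
    using denom by (intro divide_left_mono) auto
  finally show ?thesis by simp
qed

lemma continuous_on_sigma: "continuous_on {0..} sigma"
  by (rule continuous_on_eq[OF continuous_on_sigma1]) (auto simp: sigma_eq_sigma1)

lemma sigma_weight_integrable: "(\<lambda>t. sigma t / (2 * t + 1)^2) integrable_on {0..}"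
proof -
  let ?f = "\<lambda>t. sigma t / (2 * t + 1)^2"
  have cont: "continuous_on {0..} ?f"
    by (intro continuous_intros continuous_on_sigma) (auto simp: add_pos_pos)
  have "?f integrable_on {0..1}"
    by (rule integrable_continuous_interval, rule continuous_on_subset[OF cont]) auto
  moreover have "?f integrable_on {1..}"
  proof (rule measurable_bounded_by_integrable_imp_integrable[where g = "\<lambda>t. 1 / t^2"])
    show "?f \<in> borel_measurable (lebesgue_on {1..})"
      by (rule continuous_imp_measurable_on_sets_lebesgue, rule continuous_on_subset[OF cont]) auto
    show "(\<lambda>t::real. 1 / t^2) integrable_on {1..}"
      using has_integral_inverse_power_to_inf[of 2 1] by (auto simp: integrable_on_def)
    fix t :: real
    assume t: "t \<in> {1..}"
    then have s: "sigma t = sigma1 t"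
      by (simp add: sigma_eq_sigma1)
    have "sigma1 t * t^2 \<le> t^2"
      using sigma1_le_one[of t] mult_right_mono[of "sigma1 t" 1 "t^2"] by simp
    also have "\<dots> \<le> (2 * t + 1)^2"
      using t by (intro power_mono) auto
    finally show "norm (?f t) \<le> 1 / t^2"
      using t sigma1_nonneg[of t] by (auto simp: s divide_simps)
  qed auto
  ultimately show ?thesis
    by (rule integrable_Un') (auto simp: negligible_sing)
qed

lemma cconst_pos: "cconst > 0"
proof -
  let ?f = "\<lambda>t. sigma t / (2 * t + 1)^2"
  have int: "?f integrable_on {1/2..1}"
    by (rule integrable_on_subinterval[OF sigma_weight_integrable]) auto
  have "integral {1/2::real..1} (\<lambda>_. 1/18) \<le> integral {1/2..1} ?f"
  proof (rule integral_le)
    fix t :: real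
    assume t: "t \<in> {1/2..1}"
    then have "sigma t = t"
      using sigma_eq_sigma1 sigma1_eq_abs by auto
    moreover have "(2 * t + 1)^2 \<le> 3^2"
      using t by (intro power_mono) auto
    ultimately show "1/18 \<le> ?f t"
      using t by (auto simp: divide_simps)
  qed (use int in auto)
  also have "\<dots> \<le> integral {0..} ?f"
    using sigma1_nonneg sigma_eq_sigma1
    by (intro integral_subset_le[OF _ int sigma_weight_integrable]) auto
  finally show ?thesis
    unfolding cconst_def by simp
qed

lemma inverse_square_diff_bounds:
  fixes p q :: real
  assumes "0 < p" "p \<le> q"
  shows "0 \<le> 1 / p^2 - 1 / q^2" and "1 / p^2 - 1 / q^2 \<le> 2 * (q - p) / (p^2 * q)"
proof -
  have eq: "1 / p^2 - 1 / q^2 = (q - p) * (q + p) / (p^2 * q^2)"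
    using assms by (simp add: field_simps power2_eq_square)
  then show "0 \<le> 1 / p^2 - 1 / q^2"
    using assms by simp
  have "(q - p) * (q + p) / (p^2 * q^2) \<le> (q - p) * (2 * q) / (p^2 * q^2)"
    using assms by (intro divide_right_mono mult_left_mono) auto
  also have "\<dots> = 2 * (q - p) / (p^2 * q)"
    using assms by (simp add: field_simps power2_eq_square)
  finally show "1 / p^2 - 1 / q^2 \<le> 2 * (q - p) / (p^2 * q)"
    unfolding eq .
qed

definition sigma_tilde_integrand :: "real \<Rightarrow> real" where
  "sigma_tilde_integrand t = (cconst * sigma t + 1) / (2 * t + 1)^2"

lemma continuous_on_sigma_tilde_integrand: "continuous_on {0..} sigma_tilde_integrand"
  unfolding sigma_tilde_integrand_def
  by (intro continuous_intros continuous_on_sigma) (auto simp: add_pos_pos)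

lemma sigma_tilde_diff_eq_integral:
  assumes "0 \<le> a" "a \<le> b"
  shows "sigma_tilde b - sigma_tilde a = integral {a..b} sigma_tilde_integrand"
proof -
  have "sigma_tilde_integrand integrable_on {0..b}"
    by (rule integrable_continuous_interval,
        rule continuous_on_subset[OF continuous_on_sigma_tilde_integrand]) auto
  then have "integral {0..a} sigma_tilde_integrand + integral {a..b} sigma_tilde_integrand
      = integral {0..b} sigma_tilde_integrand"
    using assms by (intro Henstock_Kurzweil_Integration.integral_combine) auto
  moreover have "sigma_tilde x = integral {0..x} sigma_tilde_integrand" if "0 \<le> x" for x
    using that by (auto simp: sigma_tilde_def sigma_tilde_integrand_def[abs_def])
  ultimately show ?thesis
    using assms by simp
qed

lemma sigma_tilde_integrand_lipschitz:
  assumes "0 \<le> a" "a \<le> t"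
  shows "\<bar>sigma_tilde_integrand t - sigma_tilde_integrand a\<bar>
    \<le> (5 * cconst + 4) * (t - a) / (2 * a + 1)^2"
proof -
  define wa where "wa = 1 / (2 * a + 1)^2"
  define wt where "wt = 1 / (2 * t + 1)^2"
  have "wa - wt \<le> 2 * (2 * t - 2 * a) / ((2 * a + 1)^2 * (2 * t + 1))"
    using inverse_square_diff_bounds(2)[of "2 * a + 1" "2 * t + 1"] assms
    unfolding wa_def wt_def by simp
  also have "\<dots> \<le> 4 * (t - a) * wa"
    using assms mult_left_mono[of 1 "2 * t + 1" "4 * t - 4 * a"] unfolding wa_def
    by (simp add: divide_simps)
  finally have w: "0 \<le> wa - wt" "wa - wt \<le> 4 * (t - a) * wa" "0 \<le> wt"
    using inverse_square_diff_bounds(1)[of "2 * a + 1" "2 * t + 1"] assms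
    unfolding wa_def wt_def by auto
  have s: "\<bar>sigma t - sigma a\<bar> \<le> t - a" "0 \<le> sigma a" "sigma a \<le> 1"
    using sigma1_lipschitz[of t a] sigma1_nonneg[of a] sigma1_le_one[of a] assms
    by (auto simp: sigma_eq_sigma1)
  have "sigma_tilde_integrand t - sigma_tilde_integrand a
      = cconst * (sigma t - sigma a) * wt + (cconst * sigma a + 1) * (wt - wa)"
    unfolding sigma_tilde_integrand_def wa_def wt_def
    by (simp add: field_simps add_divide_distrib[symmetric] diff_divide_distrib[symmetric])
  also have "\<bar>\<dots>\<bar> \<le> cconst * (t - a) * wa + (cconst + 1) * (4 * (t - a) * wa)"
  proof -
    have "\<bar>cconst * (sigma t - sigma a) * wt\<bar> \<le> cconst * (t - a) * wa"
      using cconst_pos s w by (auto simp: abs_mult intro!: mult_mono)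
    moreover have "\<bar>(cconst * sigma a + 1) * (wt - wa)\<bar> \<le> (cconst + 1) * (4 * (t - a) * wa)"
      using cconst_pos s w by (auto simp: abs_mult intro!: mult_mono)
    ultimately show ?thesis
      by linarith
  qed
  also have "\<dots> = (5 * cconst + 4) * (t - a) / (2 * a + 1)^2"
    unfolding wa_def by (simp add: algebra_simps add_divide_distrib[symmetric])
  finally show ?thesis .
qed

lemma sigma_tilde_diff_quotient_approx:
  assumes "0 \<le> a" "0 < h"
  shows "\<bar>(sigma_tilde (a + h) - sigma_tilde a) / h - sigma_tilde_integrand a\<bar>
    \<le> (5 * cconst + 4) * h / (2 * a + 1)^2"
proof -
  let ?g = sigma_tilde_integrand and ?K = "(5 * cconst + 4) * h / (2 * a + 1)^2"
  have "?g integrable_on {a..a + h}"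
    using assms by (intro integrable_continuous_interval
        continuous_on_subset[OF continuous_on_sigma_tilde_integrand]) auto
  then have "integral {a..a + h} (\<lambda>t. ?g t - ?g a) = sigma_tilde (a + h) - sigma_tilde a - h * ?g a"
    using assms by (simp add: integral_diff[OF _ integrable_const_ivl] sigma_tilde_diff_eq_integral)
  moreover have "norm (integral {a..a + h} (\<lambda>t. ?g t - ?g a)) \<le> ?K * ((a + h) - a)"
  proof (rule integral_bound)
    show "continuous_on {a..a + h} (\<lambda>t. ?g t - ?g a)"
      using assms
    by (intro continuous_intros continuous_on_subset[OF continuous_on_sigma_tilde_integrand]) auto
    fix t
    assume t: "t \<in> {a..a + h}"
    have "\<bar>?g t - ?g a\<bar> \<le> (5 * cconst + 4) * (t - a) / (2 * a + 1)^2"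
      using sigma_tilde_integrand_lipschitz[of a t] t assms by auto
    also have "\<dots> \<le> ?K"
      using t cconst_pos by (intro divide_right_mono mult_left_mono) auto
    finally show "norm (?g t - ?g a) \<le> ?K"
      by simp
  qed (use assms in simp)
  ultimately have "\<bar>sigma_tilde (a + h) - sigma_tilde a - h * ?g a\<bar> \<le> ?K * h"
    by simp
  moreover have "(sigma_tilde (a + h) - sigma_tilde a) / h - ?g a
      = (sigma_tilde (a + h) - sigma_tilde a - h * ?g a) / h"
    using assms by (simp add: field_simps)
  ultimately show ?thesis
    using assms by (simp add: divide_le_eq)
qed

lemma scaled_sigma_tilde_integrand_approx:
  fixes N :: nat
  assumes "0 \<le> y"
  shows "\<bar>(4 * real N + 1)^2 * sigma_tilde_integrand (2 * real N + y) - (cconst * sigma1 y + 1)\<bar>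
    \<le> (cconst + 1) * (4 * y / (4 * real N + 1))"
proof -
  define p where "p = 4 * real N + 1"
  define q where "q = 4 * real N + 2 * y + 1"
  define r where "r = p^2 * (1 / p^2 - 1 / q^2)"
  have pq: "0 < p" "p \<le> q"
    unfolding p_def q_def using assms by auto
  have "sigma (2 * real N + y) = sigma1 y"
    using sigma1_add_even[of y "int N"] assms by (simp add: sigma_eq_sigma1 add.commute)
  moreover have "2 * (2 * real N + y) + 1 = q"
    unfolding q_def by simp
  ultimately have "p^2 * sigma_tilde_integrand (2 * real N + y) - (cconst * sigma1 y + 1)
      = - ((cconst * sigma1 y + 1) * r)"
    unfolding sigma_tilde_integrand_def r_def using pq by (simp add: field_simps)
  moreover have "0 \<le> cconst * sigma1 y + 1"
    using cconst_pos sigma1_nonneg[of y] by simp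
  moreover have r: "0 \<le> r" "r \<le> 4 * y / p"
  proof -
    show "0 \<le> r"
      unfolding r_def using inverse_square_diff_bounds(1)[OF pq] by simp
    have "r \<le> p^2 * (2 * (q - p) / (p^2 * q))"
      unfolding r_def using mult_left_mono[OF inverse_square_diff_bounds(2)[OF pq], of "p^2"] by simp
    also have "\<dots> = 2 * (q - p) / q"
      using pq by (simp add: field_simps)
    also have "\<dots> = 4 * y / q"
      unfolding q_def p_def by simp
    also have "\<dots> \<le> 4 * y / p"
      using pq assms by (simp add: frac_le)
    finally show "r \<le> 4 * y / p" .
  qed
  ultimately have "\<bar>p^2 * sigma_tilde_integrand (2 * real N + y) - (cconst * sigma1 y + 1)\<bar>
      = (cconst * sigma1 y + 1) * r"
    by simp
  also have "\<dots> \<le> (cconst + 1) * (4 * y / p)"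
    using r cconst_pos sigma1_nonneg[of y] sigma1_le_one[of y] by (intro mult_mono) auto
  finally show ?thesis
    unfolding p_def .
qed

definition sigma1_approx :: "real \<Rightarrow> real \<Rightarrow> real \<Rightarrow> real" where
  "sigma1_approx T h y =
     ((2 * T + 1)^2 * (sigma_tilde (T + y + h) - sigma_tilde (T + y)) / h - 1) / cconst"

lemma sigma1_approx_error:
  fixes N :: nat
  assumes "0 < h" "0 \<le> y"
  shows "\<bar>sigma1_approx (2 * real N) h y - sigma1 y\<bar>
    \<le> ((5 * cconst + 4) * h + (cconst + 1) * (4 * y / (4 * real N + 1))) / cconst"
proof -
  define T where "T = 2 * real N"
  define p where "p = 4 * real N + 1"
  define K where "K = 5 * cconst + 4"
  define g where "g = sigma_tilde_integrand (T + y)"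
  define dq where "dq = (sigma_tilde (T + y + h) - sigma_tilde (T + y)) / h"
  have "\<bar>dq - g\<bar> \<le> K * h / (2 * (T + y) + 1)^2"
    using sigma_tilde_diff_quotient_approx[OF _ assms(1), of "T + y"] assms
    unfolding dq_def g_def K_def T_def by (simp add: add_ac)
  then have "p^2 * \<bar>dq - g\<bar> \<le> p^2 * (K * h / (2 * (T + y) + 1)^2)"
    by (rule mult_left_mono) simp
  also have "\<dots> = K * h * (p^2 / (2 * (T + y) + 1)^2)"
    by simp
  also have "\<dots> \<le> K * h * 1"
    using cconst_pos assms unfolding K_def p_def T_def
    by (intro mult_left_mono) (auto intro!: power_mono)
  finally have "\<bar>p^2 * dq - p^2 * g\<bar> \<le> K * h"
    by (simp add: abs_mult right_diff_distrib[symmetric])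
  moreover have "\<bar>p^2 * g - (cconst * sigma1 y + 1)\<bar> \<le> (cconst + 1) * (4 * y / p)"
    using scaled_sigma_tilde_integrand_approx[OF assms(2), of N] unfolding p_def g_def T_def .
  ultimately have "\<bar>(p^2 * dq - 1) - cconst * sigma1 y\<bar> \<le> K * h + (cconst + 1) * (4 * y / p)"
    by linarith
  moreover have "sigma1_approx T h y - sigma1 y = ((p^2 * dq - 1) - cconst * sigma1 y) / cconst"
    using cconst_pos unfolding sigma1_approx_def dq_def p_def T_def by (simp add: field_simps add_ac)
  ultimately show ?thesis
    using cconst_pos unfolding T_def[symmetric] p_def[symmetric] K_def[symmetric]
    by (simp add: divide_right_mono)
qed

lemma sigma1_approx_uniform:
  assumes "0 < e"
  shows "\<exists>T h. \<forall>y\<in>{0..B}. \<bar>sigma1_approx T h y - sigma1 y\<bar> \<le> e"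
proof -
  define c where "c = cconst"
  define K where "K = 5 * c + 4"
  define h where "h = c * e / (2 * K)"
  have c: "0 < c" and K: "0 < K"
    unfolding K_def c_def using cconst_pos by auto
  have h: "0 < h" "K * h = c * e / 2"
    unfolding h_def using c K assms by simp_all
  obtain N :: nat where N: "8 * B * (c + 1) / (c * e) < real N"
    using reals_Archimedean2 by blast
  have "\<bar>sigma1_approx (2 * real N) h y - sigma1 y\<bar> \<le> e" if y: "y \<in> {0..B}" for y
  proof -
    define p where "p = 4 * real N + 1"
    have "(c + 1) * (4 * y) * 2 \<le> 8 * B * (c + 1)"
      using y c mult_right_mono[of y B "8 * (c + 1)"] by (simp add: algebra_simps)
    also have "\<dots> \<le> real N * (c * e)"
      using N c assms by (simp add: divide_less_eq)
    also have "\<dots> \<le> c * e * p"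
      using c assms unfolding p_def by (simp add: mult_right_mono)
    finally have "(c + 1) * (4 * y / p) \<le> c * e / 2"
      unfolding p_def by (simp add: divide_simps mult.commute)
    then have "K * h + (c + 1) * (4 * y / p) \<le> c * e"
      using h(2) by linarith
    then have "(K * h + (c + 1) * (4 * y / p)) / c \<le> e"
      using c by (simp add: divide_le_eq mult.commute)
    then show ?thesis
      using sigma1_approx_error[OF h(1), of y N] y unfolding c_def K_def p_def by simp
  qed
  then show ?thesis
    by blast
qed

lemma sigma1_approx_affine:
  "sigma1_approx T h = (\<lambda>y. (2 * T + 1)^2 / (h * cconst)
     * (sigma_tilde (y + (T + h)) - sigma_tilde (y + T)) + - 1 / cconst)"
  unfolding sigma1_approx_def by (simp add: diff_divide_distrib add_ac)

lemma net_generated_two_hidden_layers: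
  assumes "n1 \<le> N" "n2 \<le> N" "2 \<le> L"
  shows "net_generated act N L
    (\<lambda>x. (\<Sum>k<n2. w k * act ((\<Sum>j<n1. V k j * act (u j * x + a j)) + b k)) + c)"
  unfolding net_generated_def
proof (intro exI conjI)
  let ?ds = "[1, n1, n2, 1]"
  let ?ps = "[(\<lambda>j _. u j, a), (V, b), (\<lambda>_ k. w k, \<lambda>_. c)]"
  show "(\<lambda>x. (\<Sum>k<n2. w k * act ((\<Sum>j<n1. V k j * act (u j * x + a j)) + b k)) + c)
      = (\<lambda>x. eval_net act ?ds ?ps (\<lambda>_. x) 0)"
    by (simp add: affine_map_def)
  show "\<forall>k. 0 < k \<and> k < length ?ds - 1 \<longrightarrow> ?ds ! k \<le> N"
    using assms by (auto simp: less_Suc_eq nth_Cons')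
qed (use assms in auto)

definition approx_id :: "real \<Rightarrow> (real \<Rightarrow> real) \<Rightarrow> real \<Rightarrow> real" where
  "approx_id M P x = 4 * M * (P (1/2 + x / (4 * M)) - 1/2)"

definition approx_abs :: "real \<Rightarrow> (real \<Rightarrow> real) \<Rightarrow> real \<Rightarrow> real" where
  "approx_abs M P x = M * P (2 + x / M)"

(* The offset 2 keeps the argument of P inside [0, M + 3]; the offset \<eta> > 0 keeps the argument
   of sigma_tilde below min(x, 0), where sigma_tilde is 1-Lipschitz. *)
definition approx_sigma :: "real \<Rightarrow> real \<Rightarrow> (real \<Rightarrow> real) \<Rightarrow> real \<Rightarrow> real" where
  "approx_sigma M \<eta> P x =
     P ((approx_id M P x + approx_abs M P x) / 2 + 2)
     + sigma_tilde ((approx_id M P x - approx_abs M P x) / 2 - \<eta>)"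

lemma net_generated_approx_sigma:
  assumes "4 \<le> N" "2 \<le> L"
  shows "net_generated sigma_tilde N L
    (approx_sigma M \<eta> (\<lambda>y. \<alpha> * (sigma_tilde (y + s) - sigma_tilde (y + t)) + \<beta>))"
proof -
  define u where "u = (!) [1 / (4 * M), 1 / (4 * M), 1 / M, 1 / M]"
  define a where "a = (!) [1/2 + s, 1/2 + t, 2 + s, 2 + t]"
  define V where "V = (\<lambda>k. (!) ([[2 * M * \<alpha>, - 2 * M * \<alpha>, M * \<alpha> / 2, - M * \<alpha> / 2],
      [2 * M * \<alpha>, - 2 * M * \<alpha>, M * \<alpha> / 2, - M * \<alpha> / 2],
      [2 * M * \<alpha>, - 2 * M * \<alpha>, - M * \<alpha> / 2, M * \<alpha> / 2]] ! k))"
  define z0 where "z0 = (4 * M * (\<beta> - 1/2) + M * \<beta>) / 2 + 2"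
  define m0 where "m0 = (4 * M * (\<beta> - 1/2) - M * \<beta>) / 2 - \<eta>"
  define b where "b = (!) [z0 + s, z0 + t, m0]"
  define w where "w = (!) [\<alpha>, - \<alpha>, 1]"
  define P where "P = (\<lambda>y. \<alpha> * (sigma_tilde (y + s) - sigma_tilde (y + t)) + \<beta>)"
  have net: "approx_sigma M \<eta> P = (\<lambda>x.
      (\<Sum>k<3. w k * sigma_tilde ((\<Sum>j<4. V k j * sigma_tilde (u j * x + a j)) + b k)) + \<beta>)"
  proof
    fix x
    define X where "X = approx_id M P x"
    define A where "A = approx_abs M P x"
    define y1 where "y1 = 1/2 + x / (4 * M)"
    define y2 where "y2 = 2 + x / M"
    have sum4: "(\<Sum>j<4. f j) = f 0 + f 1 + f 2 + f 3" and sum3: "(\<Sum>j<3. f j) = f 0 + f 1 + f 2"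
      for f :: "nat \<Rightarrow> real"
      by (simp_all add: lessThan_nat_numeral)
    have first: "u 0 * x + a 0 = y1 + s" "u 1 * x + a 1 = y1 + t"
      "u 2 * x + a 2 = y2 + s" "u 3 * x + a 3 = y2 + t"
      unfolding u_def a_def y1_def y2_def by simp_all
    have XA: "X = 4 * M * (\<alpha> * (sigma_tilde (y1 + s) - sigma_tilde (y1 + t)) + \<beta> - 1/2)"
      "A = M * (\<alpha> * (sigma_tilde (y2 + s) - sigma_tilde (y2 + t)) + \<beta>)"
      unfolding X_def A_def approx_id_def approx_abs_def P_def y1_def y2_def by simp_all
    have second: "(\<Sum>j<4. V 0 j * sigma_tilde (u j * x + a j)) + b 0 = (X + A) / 2 + 2 + s"
      "(\<Sum>j<4. V 1 j * sigma_tilde (u j * x + a j)) + b 1 = (X + A) / 2 + 2 + t"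
      "(\<Sum>j<4. V 2 j * sigma_tilde (u j * x + a j)) + b 2 = (X - A) / 2 - \<eta>"
      unfolding sum4 first XA V_def b_def z0_def m0_def
      by (simp_all add: field_simps)
    show "approx_sigma M \<eta> P x
        = (\<Sum>k<3. w k * sigma_tilde ((\<Sum>j<4. V k j * sigma_tilde (u j * x + a j)) + b k)) + \<beta>"
      unfolding sum3 second approx_sigma_def X_def[symmetric] A_def[symmetric]
      by (simp add: P_def w_def algebra_simps)
  qed
  show ?thesis
    unfolding P_def[symmetric] net by (rule net_generated_two_hidden_layers) (use assms in auto)
qed

lemma approx_id_error:
  assumes "0 < M" "x \<in> {-M..M}" and P: "\<forall>y\<in>{0..1}. \<bar>P y - sigma1 y\<bar> \<le> e"
  shows "\<bar>approx_id M P x - x\<bar> \<le> 4 * M * e"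
proof -
  define y where "y = 1/2 + x / (4 * M)"
  have "-1/4 \<le> x / (4 * M)" "x / (4 * M) \<le> 1/4"
    using assms by (auto simp: divide_simps)
  then have y: "y \<in> {0..1}" "sigma1 y = y"
    unfolding y_def by (auto simp: sigma1_eq_abs)
  have "approx_id M P x - x = 4 * M * (P y - y)"
    unfolding approx_id_def y_def using assms by (simp add: field_simps)
  moreover have "\<bar>P y - sigma1 y\<bar> \<le> e"
    using P y(1) by blast
  ultimately show ?thesis
    using y(2) assms by (simp add: abs_mult)
qed

lemma approx_abs_error:
  assumes "0 < M" "x \<in> {-M..M}" and P: "\<forall>y\<in>{1..3}. \<bar>P y - sigma1 y\<bar> \<le> e"
  shows "\<bar>approx_abs M P x - \<bar>x\<bar>\<bar> \<le> M * e"
proof -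
  define y where "y = 2 + x / M"
  have "-1 \<le> x / M" "x / M \<le> 1"
    using assms by (auto simp: divide_simps)
  then have y: "y \<in> {1..3}" "sigma1 y = \<bar>x\<bar> / M"
    using sigma1_add_even[of "x / M" 1] sigma1_eq_abs[of "x / M"] assms
    unfolding y_def by (auto simp: add.commute)
  have "approx_abs M P x - \<bar>x\<bar> = M * (P y - \<bar>x\<bar> / M)"
    unfolding approx_abs_def y_def using assms by (simp add: field_simps)
  moreover have "\<bar>P y - sigma1 y\<bar> \<le> e"
    using P y(1) by blast
  ultimately show ?thesis
    using y(2) assms by (simp add: abs_mult)
qed

lemma approx_sigma_error:
  assumes "0 < M" "5 * M * e \<le> 1" and P: "\<forall>y\<in>{0..M + 3}. \<bar>P y - sigma1 y\<bar> \<le> e"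
    and x: "x \<in> {-M..M}"
  shows "\<bar>approx_sigma M (5 * M * e / 2) P x - sigma x\<bar> \<le> e + 15 * M * e / 2"
proof -
  define X where "X = approx_id M P x"
  define A where "A = approx_abs M P x"
  define d where "d = M * e"
  define z where "z = (X + A) / 2 + 2"
  define m where "m = (X - A) / 2 - 5 * d / 2"
  have "\<forall>y\<in>{0..1}. \<bar>P y - sigma1 y\<bar> \<le> e" "\<forall>y\<in>{1..3}. \<bar>P y - sigma1 y\<bar> \<le> e"
    using P assms(1) by auto
  then have EX: "\<bar>X - x\<bar> \<le> 4 * d" and EA: "\<bar>A - \<bar>x\<bar>\<bar> \<le> d"
    using approx_id_error[OF assms(1) x] approx_abs_error[OF assms(1) x]
    unfolding X_def A_def d_def by (simp_all add: mult.assoc)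
  have max_min: "max x 0 = (x + \<bar>x\<bar>) / 2" "min x 0 = (x - \<bar>x\<bar>) / 2"
    by auto
  have z_eq: "z - (max x 0 + 2) = ((X - x) + (A - \<bar>x\<bar>)) / 2"
    unfolding z_def max_min by (simp add: field_simps)
  have z: "\<bar>z - (max x 0 + 2)\<bar> \<le> 5 * d / 2"
    unfolding z_eq using EX EA by (simp add: abs_le_iff)
  have "0 \<le> max x 0" "max x 0 \<le> M" "5 * d \<le> 1"
    using x assms(2) unfolding d_def by (auto simp: mult.assoc)
  then have "z \<in> {0..M + 3}"
    using abs_le_D1[OF z] abs_le_D2[OF z] unfolding atLeastAtMost_iff by (intro conjI; linarith)
  then have "\<bar>P z - sigma1 z\<bar> \<le> e"
    using P by blast
  moreover have "\<bar>sigma1 z - sigma1 (max x 0)\<bar> \<le> 5 * d / 2"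
    using sigma1_lipschitz[of z "max x 0 + 2"] sigma1_add_even[of "max x 0" 1] z by simp
  ultimately have Pz: "\<bar>P z - sigma1 (max x 0)\<bar> \<le> e + 5 * d / 2"
    by linarith
  have m_eq: "2 * m - 2 * min x 0 = (X - x) - (A - \<bar>x\<bar>) - 5 * d"
    unfolding m_def max_min by (simp add: field_simps)
  then have "m \<le> min x 0" "min x 0 - m \<le> 5 * d"
    using abs_le_D1[OF EX] abs_le_D2[OF EX] abs_le_D1[OF EA] abs_le_D2[OF EA] by linarith+
  then have "\<bar>sigma_tilde m - sigma_tilde (min x 0)\<bar> \<le> 5 * d"
    using sigma_tilde_lipschitz_nonpos[of m "min x 0"] by auto
  with Pz have "\<bar>P z + sigma_tilde m - sigma x\<bar> \<le> e + 15 * d / 2"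
    unfolding sigma_eq_sigma1_max_plus_sigma_tilde_min[of x] by linarith
  then show ?thesis
    unfolding approx_sigma_def X_def[symmetric] A_def[symmetric] z_def[symmetric]
    by (simp add: m_def d_def mult.assoc)
qed

theorem lemma12:
  fixes \<epsilon> M :: real
  assumes "\<epsilon> > 0" and "M > 0"
  shows "\<exists>\<phi>. net_generated sigma_tilde 50 6 \<phi> \<and>
           (\<forall>x\<in>{-M..M}. \<bar>\<phi> x - sigma x\<bar> < \<epsilon>)"
proof -
  define e where "e = min (\<epsilon> / (2 + 16 * M)) (1 / (5 * M))"
  have e: "0 < e" "e \<le> 1 / (5 * M)" "e \<le> \<epsilon> / (2 + 16 * M)"
    using assms by (auto simp: e_def)
  then have e_small: "5 * M * e \<le> 1" and "2 * e + 16 * (M * e) \<le> \<epsilon>"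
    using assms by (simp_all add: le_divide_eq algebra_simps)
  moreover have "e + 15 * M * e / 2 < 2 * e + 16 * (M * e)"
    using e(1) mult_pos_pos[OF assms(2) e(1)] by (simp add: field_simps)
  ultimately have e_err: "e + 15 * M * e / 2 < \<epsilon>"
    by linarith
  obtain T h where approx: "\<forall>y\<in>{0..M + 3}. \<bar>sigma1_approx T h y - sigma1 y\<bar> \<le> e"
    using sigma1_approx_uniform[OF e(1)] by blast
  have "net_generated sigma_tilde 50 6 (approx_sigma M (5 * M * e / 2) (sigma1_approx T h))"
    unfolding sigma1_approx_affine by (rule net_generated_approx_sigma) simp_all
  moreover have "\<bar>approx_sigma M (5 * M * e / 2) (sigma1_approx T h) x - sigma x\<bar> < \<epsilon>"
    if "x \<in> {-M..M}" for x
    using approx_sigma_error[OF assms(2) e_small approx that] e_err by linarith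
  ultimately show ?thesis
    by blast
qed

end
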